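(* Let $\epsilon\in(0,1)$, $d\ge1$, and let $f$ be the binary-tree function of depth $d$ on $n=2^{d+1}-2$ variables, with unit costs and $p_i=\frac{1+\epsilon}{2}$ for all $i$. Then $$\mathsf{OPT}_{\mathcal A}(f,c,p)\le 2\sum_{i=0}^{d}(1+\epsilon)^i.$$
   Context: Stochastic Boolean Function Evaluation setup: the input $x\in\{0,1\}^n$ has independent coordinates with $\Pr(x_i=1)=p_i$; testing $x_i$ costs $c_i$ (here $c_i=1$). A strategy tests variables sequentially until $f(x)$ is determined (i.e. $f(x')=f(x)$ for all $x'$ agreeing with $x$ on tested coordinates); an adaptive strategy may choose each next test based on previous outcomes. $\mathsf{OPT}_{\mathcal A}(f,c,p)$ is the minimum expected total test cost over adaptive strategies. Binary-tree function of depth $d$: in the complete binary tree of depth $d$ (root at depth $0$, $2^d$ leaves), the $n=2^{d+1}-2$ edges are numbered $1,\dots,n$ and variable $x_i$ is associated with edge $i$; a leaf is alive if $x_i=1$ for every edge on its root-to-leaf path, and $f(x)=1$ iff some leaf is alive. *)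

theory Defs
  imports Complex_Main
begin

definition inputs :: "nat \<Rightarrow> (nat \<Rightarrow> bool) set" where
  "inputs n = {x. \<forall>i. x i \<longrightarrow> i \<in> {1..n}}"

text \<open>Adaptive strategies as decision trees: Test i t0 t1 tests x_i and
continues with t0 if x_i = 0 and with t1 if x_i = 1; Stop halts.\<close>

datatype dtree = Stop | Test nat dtree dtree

fun tested :: "dtree \<Rightarrow> (nat \<Rightarrow> bool) \<Rightarrow> nat list" where
  "tested Stop x = []"
| "tested (Test i t0 t1) x = i # tested (if x i then t1 else t0) x"

definition evaluates :: "nat \<Rightarrow> ((nat \<Rightarrow> bool) \<Rightarrow> bool) \<Rightarrow> dtree \<Rightarrow> bool" where
  "evaluates n f T \<longleftrightarrow>
     (\<forall>x\<in>inputs n. \<forall>x'\<in>inputs n.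
        (\<forall>i\<in>set (tested T x). x' i = x i) \<longrightarrow> f x' = f x)"

definition prob_input :: "nat \<Rightarrow> (nat \<Rightarrow> real) \<Rightarrow> (nat \<Rightarrow> bool) \<Rightarrow> real" where
  "prob_input n p x = (\<Prod>i\<in>{1..n}. if x i then p i else 1 - p i)"

definition exp_cost :: "nat \<Rightarrow> (nat \<Rightarrow> real) \<Rightarrow> (nat \<Rightarrow> real) \<Rightarrow> dtree \<Rightarrow> real" where
  "exp_cost n c p T = (\<Sum>x\<in>inputs n. prob_input n p x * sum_list (map c (tested T x)))"

definition OPT_A :: "nat \<Rightarrow> ((nat \<Rightarrow> bool) \<Rightarrow> bool) \<Rightarrow> (nat \<Rightarrow> real) \<Rightarrow> (nat \<Rightarrow> real) \<Rightarrow> real" where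
  "OPT_A n f c p = Inf (exp_cost n c p ` {T. evaluates n f T})"

text \<open>Binary-tree function of depth d, heap numbering: nodes 1..2^(d+1)-1, root 1,
children of v are 2v and 2v+1, leaves 2^d..2^(d+1)-1. The edge entering node u
(u >= 2) is edge number u - 1, so edges are numbered 1..2^(d+1)-2. The ancestors
of v (including v) are v div 2^k.\<close>

definition leaf_alive :: "(nat \<Rightarrow> bool) \<Rightarrow> nat \<Rightarrow> bool" where
  "leaf_alive x v \<longleftrightarrow> (\<forall>k::nat. v div 2^k \<ge> 2 \<longrightarrow> x (v div 2^k - 1))"

definition bt_fun :: "nat \<Rightarrow> (nat \<Rightarrow> bool) \<Rightarrow> bool" where
  "bt_fun d x \<longleftrightarrow> (\<exists>v\<in>{2^d..<2^(d+1)}. leaf_alive x v)"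

end

theory Submission
  imports Defs
begin

text \<open>
  Explore the tree depth first: at a node, test the edges into both children and descend into a
  child exactly when the edge into it is alive. Every visited inner node costs two tests, and a node
  at depth i is visited iff the i edges above it are alive, which has probability p^i. With 2^i
  nodes at depth i and 2p = 1 + \<epsilon>, the expected cost is 2 \<Sum>i<d. (1 + \<epsilon>)^i.
\<close>

definition expect :: "nat \<Rightarrow> (nat \<Rightarrow> real) \<Rightarrow> ((nat \<Rightarrow> bool) \<Rightarrow> real) \<Rightarrow> real" where
  "expect n p g = (\<Sum>x\<in>inputs n. prob_input n p x * g x)"

definition prob_input_except :: "nat \<Rightarrow> (nat \<Rightarrow> real) \<Rightarrow> nat \<Rightarrow> (nat \<Rightarrow> bool) \<Rightarrow> real" where
  "prob_input_except n p j x = (\<Prod>i\<in>{1..n}-{j}. if x i then p i else 1 - p i)"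

lemma inputs_eq_image_Pow: "inputs n = (\<lambda>S i. i \<in> S) ` Pow {1..n}"
proof
  show "inputs n \<subseteq> (\<lambda>S i. i \<in> S) ` Pow {1..n}"
  proof
    fix x assume "x \<in> inputs n"
    then have "{i. x i} \<in> Pow {1..n}" "x = (\<lambda>i. i \<in> {i. x i})" by (auto simp: inputs_def)
    then show "x \<in> (\<lambda>S i. i \<in> S) ` Pow {1..n}" by blast
  qed
qed (auto simp: inputs_def)

lemma finite_inputs [simp]: "finite (inputs n)"
  by (simp add: inputs_eq_image_Pow)

lemma sum_prob_input: "(\<Sum>x\<in>inputs n. prob_input n p x) = 1"
proof -
  have inj: "inj_on (\<lambda>S i. i \<in> S) (Pow {1..n})"
    by (rule inj_onI) (auto simp: fun_eq_iff)
  have "(\<Sum>x\<in>inputs n. prob_input n p x) = (\<Sum>S\<in>Pow {1..n}. prob_input n p (\<lambda>i. i \<in> S))"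
    unfolding inputs_eq_image_Pow by (rule sum.reindex[OF inj, unfolded comp_def])
  also have "\<dots> = (\<Sum>S\<in>Pow {1..n}. prod p S * (\<Prod>i\<in>{1..n}-S. 1 - p i))"
  proof (intro sum.cong refl)
    fix S assume "S \<in> Pow {1..n}"
    then have "{1..n} \<inter> {i. i \<in> S} = S" "{1..n} \<inter> - {i. i \<in> S} = {1..n} - S" by auto
    then show "prob_input n p (\<lambda>i. i \<in> S) = prod p S * (\<Prod>i\<in>{1..n}-S. 1 - p i)"
      unfolding prob_input_def by (simp add: prod.If_cases)
  qed
  also have "\<dots> = (\<Prod>i\<in>{1..n}. p i + (1 - p i))"
    by (rule prod_add[symmetric]) simp
  finally show ?thesis by simp
qed

lemma expect_const [simp]: "expect n p (\<lambda>_. c) = c"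
  by (simp add: expect_def sum_distrib_right[symmetric] sum_prob_input)

lemma expect_add: "expect n p (\<lambda>x. f x + g x) = expect n p f + expect n p g"
  by (simp add: expect_def distrib_left sum.distrib)

lemma prob_input_fun_upd:
  assumes "j \<in> {1..n}"
  shows "prob_input n p (x(j := b)) = (if b then p j else 1 - p j) * prob_input_except n p j x"
proof -
  have "prob_input n p y = (if y j then p j else 1 - p j) * prob_input_except n p j y" for y
    unfolding prob_input_def prob_input_except_def using assms by (simp add: prod.remove)
  moreover have "prob_input_except n p j (x(j := b)) = prob_input_except n p j x"
    unfolding prob_input_except_def by (intro prod.cong) auto
  ultimately show ?thesis by simp
qed

lemma sum_inputs_pair_fun_upd:
  assumes "j \<in> {1..n}"
  shows "(\<Sum>x\<in>inputs n. h x) = (\<Sum>x\<in>{x\<in>inputs n. \<not> x j}. h (x(j := False)) + h (x(j := True)))"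
proof -
  define A where "A = {x\<in>inputs n. \<not> x j}"
  have upd_in: "x(j := True) \<in> inputs n" if "x \<in> A" for x
    using that assms by (simp add: A_def inputs_def)
  have split: "inputs n = A \<union> (\<lambda>x. x(j := True)) ` A"
  proof (intro equalityI subsetI)
    fix x assume x: "x \<in> inputs n"
    show "x \<in> A \<union> (\<lambda>x. x(j := True)) ` A"
    proof (cases "x j")
      case True
      then have "x = (x(j := False))(j := True)" "x(j := False) \<in> A"
        using x by (auto simp: A_def inputs_def fun_eq_iff)
      then show ?thesis by blast
    qed (use x in \<open>simp add: A_def\<close>)
  qed (use upd_in in \<open>auto simp: A_def\<close>)
  have inj: "inj_on (\<lambda>x. x(j := True)) A"
  proof (rule inj_onI)
    fix y z assume "y \<in> A" "z \<in> A" "y(j := True) = z(j := True)"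
    then show "y = z" by (simp add: A_def fun_eq_iff) (metis fun_upd_other)
  qed
  have disj: "A \<inter> (\<lambda>x. x(j := True)) ` A = {}"
    by (auto simp: A_def)
  have "finite A" by (simp add: A_def)
  then have "(\<Sum>x\<in>inputs n. h x) = (\<Sum>x\<in>A. h x) + (\<Sum>x\<in>A. h (x(j := True)))"
    unfolding split by (simp add: sum.union_disjoint[OF _ _ disj] sum.reindex[OF inj])
  also have "(\<Sum>x\<in>A. h x) = (\<Sum>x\<in>A. h (x(j := False)))"
    by (intro sum.cong refl) (simp add: A_def fun_upd_idem)
  finally show ?thesis
    unfolding A_def by (simp only: sum.distrib)
qed

lemma expect_if_var:
  assumes j: "j \<in> {1..n}" and g: "\<And>x b. g (x(j := b)) = g x"
  shows "expect n p (\<lambda>x. if x j then g x else 0) = p j * expect n p g"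
proof -
  define A where "A = {x\<in>inputs n. \<not> x j}"
  define q where "q = prob_input_except n p j"
  have "expect n p (\<lambda>x. if x j then g x else 0) = (\<Sum>x\<in>A. p j * (q x * g x))"
    unfolding expect_def sum_inputs_pair_fun_upd[OF j] A_def q_def
    by (simp add: prob_input_fun_upd[OF j] g mult.assoc)
  moreover have "expect n p g = (\<Sum>x\<in>A. q x * g x)"
    unfolding expect_def sum_inputs_pair_fun_upd[OF j] A_def q_def
    by (simp add: prob_input_fun_upd[OF j] g algebra_simps)
  ultimately show ?thesis by (simp add: sum_distrib_left)
qed

lemma exp_cost_unit: "exp_cost n (\<lambda>_. 1) p T = expect n p (\<lambda>x. real (length (tested T x)))"
  by (simp add: exp_cost_def expect_def sum_list_triv)

lemma OPT_A_le_exp_cost: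
  assumes "evaluates n f T" and "\<And>i. 0 \<le> c i" and "\<And>i. 0 \<le> p i \<and> p i \<le> 1"
  shows "OPT_A n f c p \<le> exp_cost n c p T"
proof -
  have "0 \<le> exp_cost n c p T'" for T'
    unfolding exp_cost_def prob_input_def using assms(2,3)
    by (intro sum_nonneg mult_nonneg_nonneg prod_nonneg sum_list_nonneg) auto
  then show ?thesis
    unfolding OPT_A_def using assms(1) by (intro cInf_lower bdd_belowI[of _ 0]) auto
qed

fun seq_dtree :: "dtree \<Rightarrow> dtree \<Rightarrow> dtree" where
  "seq_dtree Stop T = T"
| "seq_dtree (Test i T0 T1) T = Test i (seq_dtree T0 T) (seq_dtree T1 T)"

lemma tested_seq_dtree [simp]: "tested (seq_dtree S T) x = tested S x @ tested T x"
  by (induction S) auto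

lemma tested_cong: "(\<And>i. i \<in> set (tested T x) \<Longrightarrow> x' i = x i) \<Longrightarrow> tested T x' = tested T x"
  by (induction T) auto

text \<open>The strategy never stops early; that does not matter for an upper bound.\<close>

fun dfs_strategy :: "nat \<Rightarrow> nat \<Rightarrow> dtree" where
  "dfs_strategy v 0 = Stop"
| "dfs_strategy v (Suc h) =
     seq_dtree (Test (2*v - 1) Stop (dfs_strategy (2*v) h)) (Test (2*v) Stop (dfs_strategy (2*v + 1) h))"

lemma tested_dfs_strategy_Suc:
  "tested (dfs_strategy v (Suc h)) x =
     (2*v - 1) # (if x (2*v - 1) then tested (dfs_strategy (2*v) h) x else []) @
     (2*v) # (if x (2*v) then tested (dfs_strategy (2*v + 1) h) x else [])"
  by simp

declare dfs_strategy.simps(2) [simp del]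

lemma tested_dfs_strategy_ge:
  "i \<in> set (tested (dfs_strategy v h) x) \<Longrightarrow> 2*v - 1 \<le> i"
proof (induction h arbitrary: v)
  case (Suc h)
  then show ?case
    using Suc.IH[of "2*v"] Suc.IH[of "2*v + 1"]
    by (fastforce simp: tested_dfs_strategy_Suc split: if_splits)
qed simp

lemma tested_dfs_strategy_fun_upd:
  "j < 2*v - 1 \<Longrightarrow> tested (dfs_strategy v h) (x(j := b)) = tested (dfs_strategy v h) x"
  by (rule tested_cong) (metis fun_upd_other leD tested_dfs_strategy_ge)

text \<open>The bound on v says that the last node (v + 1) 2^h - 1 of the subtree exists, so all edges it
  tests are variables.\<close>

lemma expect_length_dfs_strategy:
  assumes "1 \<le> v" and "(v + 1) * 2^h \<le> n + 2"
  shows "expect n (\<lambda>_. q) (\<lambda>x. real (length (tested (dfs_strategy v h) x))) = 2 * (\<Sum>i<h. (2*q)^i)"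
  using assms
proof (induction h arbitrary: v)
  case (Suc h)
  define L0 where "L0 x = real (length (tested (dfs_strategy (2*v) h) x))" for x
  define L1 where "L1 x = real (length (tested (dfs_strategy (2*v + 1) h) x))" for x
  have "(v + 1) * 2 \<le> (v + 1) * 2^Suc h"
    by (intro mult_le_mono2) simp
  then have edges: "2*v - 1 \<in> {1..n}" "2*v \<in> {1..n}"
    using Suc.prems by auto
  have "expect n (\<lambda>_. q) L0 = 2 * (\<Sum>i<h. (2*q)^i)"
    unfolding L0_def using Suc.IH[of "2*v"] Suc.prems by simp
  moreover have "expect n (\<lambda>_. q) L1 = 2 * (\<Sum>i<h. (2*q)^i)"
    unfolding L1_def using Suc.IH[of "2*v + 1"] Suc.prems by simp
  moreover have "L0 (x(2*v - 1 := b)) = L0 x" "L1 (x(2*v := b)) = L1 x" for x b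
    unfolding L0_def L1_def using Suc.prems by (simp_all add: tested_dfs_strategy_fun_upd)
  moreover have "real (length (tested (dfs_strategy v (Suc h)) x))
      = 2 + ((if x (2*v - 1) then L0 x else 0) + (if x (2*v) then L1 x else 0))" for x
    unfolding L0_def L1_def tested_dfs_strategy_Suc by simp
  ultimately have "expect n (\<lambda>_. q) (\<lambda>x. real (length (tested (dfs_strategy v (Suc h)) x)))
      = 2 + 2 * (2*q) * (\<Sum>i<h. (2*q)^i)"
    using edges by (simp add: expect_add expect_if_var)
  also have "\<dots> = 2 * (\<Sum>i<Suc h. (2*q)^i)"
    unfolding sum.lessThan_Suc_shift by (simp add: sum_distrib_left mult.assoc)
  finally show ?case .
qed simp

fun subtree_alive :: "(nat \<Rightarrow> bool) \<Rightarrow> nat \<Rightarrow> nat \<Rightarrow> bool" where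
  "subtree_alive x v 0 = True"
| "subtree_alive x v (Suc h) \<longleftrightarrow>
     x (2*v - 1) \<and> subtree_alive x (2*v) h \<or> x (2*v) \<and> subtree_alive x (2*v + 1) h"

lemma subtree_alive_cong:
  "(\<And>i. i \<in> set (tested (dfs_strategy v h) x) \<Longrightarrow> x' i = x i) \<Longrightarrow>
     subtree_alive x' v h = subtree_alive x v h"
proof (induction h arbitrary: v)
  case (Suc h)
  then have "x' (2*v - 1) = x (2*v - 1)" "x' (2*v) = x (2*v)"
    and "x (2*v - 1) \<Longrightarrow> subtree_alive x' (2*v) h = subtree_alive x (2*v) h"
    and "x (2*v) \<Longrightarrow> subtree_alive x' (2*v + 1) h = subtree_alive x (2*v + 1) h"
    by (simp_all add: tested_dfs_strategy_Suc)
  then show ?case by auto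
qed simp

lemma div_2_eq_iff: "(u::nat) div 2 = v \<longleftrightarrow> u = 2*v \<or> u = 2*v + 1"
  by auto

lemma subtree_alive_iff_path:
  "1 \<le> v \<Longrightarrow> subtree_alive x v h \<longleftrightarrow> (\<exists>w. w div 2^h = v \<and> (\<forall>k<h. x (w div 2^k - 1)))"
proof (induction h arbitrary: v)
  case (Suc h)
  have IH: "subtree_alive x u h \<longleftrightarrow> (\<exists>w. w div 2^h = u \<and> (\<forall>k<h. x (w div 2^k - 1)))"
    if "u div 2 = v" for u
    using Suc that by (intro Suc.IH) auto
  have "subtree_alive x v (Suc h) \<longleftrightarrow> (\<exists>u. u div 2 = v \<and> x (u - 1) \<and> subtree_alive x u h)"
    unfolding div_2_eq_iff by auto
  also have "\<dots> \<longleftrightarrow> (\<exists>u. u div 2 = v \<and> x (u - 1) \<and> (\<exists>w. w div 2^h = u \<and> (\<forall>k<h. x (w div 2^k - 1))))"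
    using IH by blast
  also have "\<dots> \<longleftrightarrow> (\<exists>w. w div 2^h div 2 = v \<and> (\<forall>k<Suc h. x (w div 2^k - 1)))"
    by (auto simp: less_Suc_eq)
  finally show ?case
    by (simp only: power_Suc2 div_mult2_eq)
qed simp

lemma two_le_div_power_iff:
  fixes w :: nat
  assumes "w \<in> {2^d..<2^(d+1)}"
  shows "2 \<le> w div 2^k \<longleftrightarrow> k < d"
proof -
  have "2 \<le> w div 2^k \<longleftrightarrow> 2^(k+1) \<le> w"
    by (simp add: less_eq_div_iff_mult_less_eq mult.commute)
  moreover have "k < d" if "2^(k+1) \<le> w"
  proof -
    have "(2::nat)^(k+1) < 2^(d+1)"
      using that assms by (meson atLeastLessThan_iff le_less_trans)
    then have "k + 1 < d + 1" by (rule power_less_imp_less_exp[rotated]) simp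
    then show ?thesis by simp
  qed
  moreover have "k < d \<Longrightarrow> 2^(k+1) \<le> w"
    using assms power_increasing[of "k+1" d "2::nat"] by simp
  ultimately show ?thesis by blast
qed

lemma leaf_alive_iff_path:
  "w \<in> {2^d..<2^(d+1)} \<Longrightarrow> leaf_alive x w \<longleftrightarrow> (\<forall>k<d. x (w div 2^k - 1))"
  unfolding leaf_alive_def by (simp add: two_le_div_power_iff)

lemma div_power_eq_1_iff: "(w::nat) div 2^d = 1 \<longleftrightarrow> w \<in> {2^d..<2^(d+1)}"
proof -
  have "w div 2^d = 1 \<longleftrightarrow> 0 < w div 2^d \<and> w div 2^d < 2" by auto
  then show ?thesis by (simp add: div_greater_zero_iff div_less_iff_less_mult)
qed

lemma bt_fun_iff_subtree_alive: "bt_fun d x \<longleftrightarrow> subtree_alive x 1 d"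
  unfolding bt_fun_def subtree_alive_iff_path[OF order_refl]
  by (metis div_power_eq_1_iff leaf_alive_iff_path)

lemma dfs_strategy_evaluates_bt_fun: "evaluates n (bt_fun d) (dfs_strategy 1 d)"
  unfolding evaluates_def bt_fun_iff_subtree_alive by (metis subtree_alive_cong)

theorem mainTheorem12:
  fixes \<epsilon> :: real and d :: nat
  assumes "0 < \<epsilon>" and "\<epsilon> < 1" and "1 \<le> d"
  shows "OPT_A (2^(d+1) - 2) (bt_fun d) (\<lambda>_. 1) (\<lambda>_. (1 + \<epsilon>) / 2)
           \<le> 2 * (\<Sum>i=0..d. (1 + \<epsilon>) ^ i)"
proof -
  let ?n = "2^(d+1) - 2 :: nat" and ?p = "\<lambda>_. (1 + \<epsilon>) / 2"
  have "OPT_A ?n (bt_fun d) (\<lambda>_. 1) ?p \<le> exp_cost ?n (\<lambda>_. 1) ?p (dfs_strategy 1 d)"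
    using assms by (intro OPT_A_le_exp_cost dfs_strategy_evaluates_bt_fun) auto
  also have "\<dots> = 2 * (\<Sum>i<d. (2 * ((1 + \<epsilon>) / 2))^i)"
    unfolding exp_cost_unit by (rule expect_length_dfs_strategy) simp_all
  also have "\<dots> = 2 * (\<Sum>i<d. (1 + \<epsilon>)^i)"
    by (simp only: times_divide_eq_right nonzero_mult_div_cancel_left zero_neq_numeral)
  also have "\<dots> \<le> 2 * (\<Sum>i=0..d. (1 + \<epsilon>)^i)"
    using assms by (intro mult_left_mono sum_mono2) auto
  finally show ?thesis .
qed

end
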